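(* Consider a trajectory $\mathbf A(t)$, $t\ge0$, of the proto-cell ODE system described in the context. Let $\mathbf b$ be a moiety or a positive linear combination of moieties such that $\mathscr S_{me}\subseteq\mathrm{supp}(\mathbf b)$ and $\mathbf b$ is fed with some nutrient flux (i.e. $\mathbf b^T\mathbf f_{nu}>0$, equivalently $\mathscr S_{nu}\cap\mathrm{supp}(\mathbf b)\neq\varnothing$). Then $\mathbf b^T\mathbf A(t)$ has a strictly positive lower bound: if $\mathbf b^T\mathbf A(0)>0$, there is $c>0$ with $\mathbf b^T\mathbf A(t)\ge c$ for all $t\ge0$; if $\mathbf b^T\mathbf A(0)=0$, then for every $t_1>0$ there is $c>0$ with $\mathbf b^T\mathbf A(t)\ge c$ for all $t\ge t_1$.
   Context: A chemical reaction network (CRN) has species $\mathscr S=\{A_0,\dots,A_{N-1}\}$ and $R$ reactions, with $N\times R$ stoichiometry matrix $S$. It is conservative: there is $\mathbf m\in\mathbb R^N$ with all $m_i>0$ and $\mathbf m^TS=0$. Let $p=\dim\ker(S^T)\ge 1$. The set $\{\mathbf b\in\mathbb R^N_{\ge 0}:\mathbf b^TS=0\}$ is a pointed convex cone; a set of moieties is a family of $p$ linearly independent generating vectors of this cone forming a basis of $\ker(S^T)$. The support $\mathrm{supp}(\mathbf b)$ of a nonnegative vector $\mathbf b$ is the set of species $A_i$ with $b_i\neq 0$. Proto-cell ODE: the concentration vector $\mathbf A(t)\in\mathbb R^N_{\ge0}$ (component $[A_i]$) satisfies $$\frac{d\mathbf A}{dt}=S\mathbf f(\mathbf A)+\mathbf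 f_{nu}(\mathbf A)-\mathbf f_{me}(\mathbf A)-\lambda(\mathbf A)\mathbf A,$$ where: $\mathbf f(\mathbf A)\in\mathbb R^R_{\ge0}$ is the vector of reaction rates; one species $A_{me}$ is the membrane precursor and $\mathscr S_{me}\subseteq\mathscr S$ is a set of species containing $A_{me}$; $\mathbf f_{me}(\mathbf A)$ has a single nonzero component, along $A_{me}$, equal to a scalar $f_{me}(\mathbf A)$ which depends only on the concentrations of species in $\mathscr S_{me}$, is continuous and monotonically increasing in these concentrations, satisfies $f_{me}(\mathbf 0)=0$, and is $>0$ iff all species of $\mathscr S_{me}$ have positive concentration; $C_{me}>0$ is a constant and $\lambda(\mathbf A)=f_{me}(\mathbf A)/C_{me}$ is the growth rate; $\mathscr S_{nu}\subseteq\mathscr S$ is the set of nutrients and $\mathbf f_{nu}$ has nonzero components only along species of $\mathscr S_{nu}$, being either (i) a constant vector with $f_{nu,i}>0$ for $A_i\in\mathscr S_{nu}$, or (ii) given by $f_{nu,i}=\mathcal D_i([A_{i,out}]-[A_i])/(1+[A_{i,out}]/K_{i,out})$ for $A_i\in\mathscr S_{nu}$, with positive constants $\mathcal D_i$, $[A_{i,out}]$, $K_{i,out}$. *)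

theory Defs
  imports "HOL-Analysis.Analysis"
begin

text \<open>Species are indexed by a finite type 'n (N = CARD('n)), reactions by a finite
type 'r (R = CARD('r)). The stoichiometry matrix S is an N x R matrix,
i.e. of type real^'r^'n; the row vector b^T S is written b v* S.\<close>

definition nonneg_vec :: "real^'n \<Rightarrow> bool" where
  "nonneg_vec x \<longleftrightarrow> (\<forall>i. 0 \<le> x $ i)"

definition supp_vec :: "real^'n \<Rightarrow> 'n set" where
  "supp_vec b = {i. b $ i \<noteq> 0}"

definition left_kernel :: "real^'r^'n \<Rightarrow> (real^'n) set" where
  "left_kernel S = {b. b v* S = 0}"

definition conservative :: "real^'r^'n \<Rightarrow> bool" where
  "conservative S \<longleftrightarrow> (\<exists>m. (\<forall>i. 0 < m $ i) \<and> m v* S = 0)"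

definition moiety_cone :: "real^'r^'n \<Rightarrow> (real^'n) set" where
  "moiety_cone S = {b. nonneg_vec b \<and> b v* S = 0}"

definition moieties :: "real^'r^'n \<Rightarrow> (real^'n) set \<Rightarrow> bool" where
  "moieties S Mo \<longleftrightarrow>
     Mo \<subseteq> moiety_cone S \<and> independent Mo \<and> span Mo = left_kernel S \<and>
     card Mo = dim (left_kernel S) \<and>
     moiety_cone S = {(\<Sum>m\<in>Mo. c m *\<^sub>R m) | c. \<forall>m\<in>Mo. 0 \<le> c m}"

definition protocell_rhs ::
  "real^'r^'n \<Rightarrow> (real^'n \<Rightarrow> real^'r) \<Rightarrow> (real^'n \<Rightarrow> real^'n) \<Rightarrow>
   (real^'n \<Rightarrow> real) \<Rightarrow> 'n \<Rightarrow> real \<Rightarrow> real^'n \<Rightarrow> real^'n" where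
  "protocell_rhs S f fnu fme me Cme A =
     S *v f A + fnu A - fme A *\<^sub>R axis me 1 - (fme A / Cme) *\<^sub>R A"

definition membrane_flux :: "'n set \<Rightarrow> 'n \<Rightarrow> (real^'n \<Rightarrow> real) \<Rightarrow> bool" where
  "membrane_flux Sme me fme \<longleftrightarrow>
     me \<in> Sme \<and>
     (\<forall>x y. (\<forall>i\<in>Sme. x $ i = y $ i) \<longrightarrow> fme x = fme y) \<and>
     continuous_on {x. nonneg_vec x} fme \<and>
     (\<forall>x y. nonneg_vec x \<and> nonneg_vec y \<and> (\<forall>i. x $ i \<le> y $ i) \<longrightarrow> fme x \<le> fme y) \<and>
     fme 0 = 0 \<and>
     (\<forall>x. nonneg_vec x \<longrightarrow> (0 < fme x \<longleftrightarrow> (\<forall>i\<in>Sme. 0 < x $ i)))"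

definition nutrient_flux :: "'n set \<Rightarrow> (real^'n \<Rightarrow> real^'n) \<Rightarrow> bool" where
  "nutrient_flux Snu fnu \<longleftrightarrow>
     (\<forall>x. \<forall>i. i \<notin> Snu \<longrightarrow> fnu x $ i = 0) \<and>
     ((\<exists>c. (\<forall>i\<in>Snu. 0 < c $ i) \<and> (\<forall>x. \<forall>i\<in>Snu. fnu x $ i = c $ i)) \<or>
      (\<exists>D Aout K :: 'n \<Rightarrow> real. (\<forall>i\<in>Snu. 0 < D i \<and> 0 < Aout i \<and> 0 < K i) \<and>
         (\<forall>x. \<forall>i\<in>Snu. fnu x $ i = D i * (Aout i - x $ i) / (1 + Aout i / K i))))"

end

theory Submission
  imports Defs
begin

text \<open>Pairing the ODE with \<open>b\<close> kills the reaction term, since \<open>b v* S = 0\<close>, and leaves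
\<open>y' = b \<bullet> fnu A - fme A * (b$me + y / Cme)\<close> for \<open>y = b \<bullet> A\<close>. When \<open>y\<close> is small, every
species of \<open>supp_vec b\<close> is scarce: the nutrient term is then bounded below by a positive
constant, while, because \<open>Sme \<subseteq> supp_vec b\<close>, continuity of \<open>fme\<close> at \<open>0\<close> makes the
membrane term as small as we like. Hence \<open>y' > 0\<close> below some threshold \<open>\<epsilon>\<close>, so \<open>y\<close> never
drops below \<open>min \<epsilon> (y s)\<close> after time \<open>s\<close>, and \<open>y\<close> leaves \<open>0\<close> immediately.\<close>

lemma increasing_below_threshold:
  fixes y y' :: "real \<Rightarrow> real"
  assumes der: "\<And>t. t \<ge> 0 \<Longrightarrow> (y has_real_derivative y' t) (at t within {0..})"
    and pos: "\<And>t. t \<ge> 0 \<Longrightarrow> y t < m \<Longrightarrow> y' t > 0"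
    and "0 \<le> a" "a < b"
    and below: "\<And>u. a < u \<Longrightarrow> u < b \<Longrightarrow> y u < m"
  shows "y a < y b"
proof -
  have "\<exists>x\<in>{a<..<b}. y b - y a = y' x * (b - a)"
  proof (rule mvt_simple[OF \<open>a < b\<close>])
    fix x assume "a \<le> x" "x \<le> b"
    have "(y has_real_derivative y' x) (at x within {a..b})"
      by (rule DERIV_subset[OF der]) (use \<open>0 \<le> a\<close> \<open>a \<le> x\<close> in auto)
    then show "(y has_derivative (*) (y' x)) (at x within {a..b})"
      by (simp add: has_field_derivative_def)
  qed
  then obtain x where x: "a < x" "x < b" "y b - y a = y' x * (b - a)" by auto
  have "y' x > 0" using pos[of x] below[of x] x \<open>0 \<le> a\<close> by auto
  with x \<open>a < b\<close> have "0 < y b - y a" by simp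
  then show ?thesis by simp
qed

text \<open>The proof looks at the last time in \<open>[s, t]\<close> at which \<open>y \<ge> m\<close>; after it \<open>y\<close> increases.\<close>

lemma threshold_or_increase:
  fixes y y' :: "real \<Rightarrow> real"
  assumes der: "\<And>t. t \<ge> 0 \<Longrightarrow> (y has_real_derivative y' t) (at t within {0..})"
    and pos: "\<And>t. t \<ge> 0 \<Longrightarrow> y t < m \<Longrightarrow> y' t > 0"
    and s: "0 \<le> s" "s < t"
  shows "m \<le> y t \<or> y s < y t"
proof (rule ccontr)
  assume contra: "\<not> (m \<le> y t \<or> y s < y t)"
  have cont: "continuous_on {0..} y"
    unfolding continuous_on_eq_continuous_within
    using der DERIV_continuous by (metis atLeast_iff)
  define U where "U = {s..t} \<inter> y -` {m..}"
  show False
  proof (cases "U = {}")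
    case True
    have "y u < m" if "s < u" "u < t" for u
      using True that unfolding U_def
      by (metis IntI atLeastAtMost_iff atLeast_iff empty_iff less_imp_le not_le vimage_eq)
    then have "y s < y t" using increasing_below_threshold[OF der pos s] by blast
    with contra show False by auto
  next
    case False
    have "closed U" unfolding U_def
      by (rule continuous_closed_preimage) (use s in \<open>auto intro: continuous_on_subset[OF cont]\<close>)
    moreover have bdd: "bdd_above U" unfolding U_def by auto
    ultimately have u0U: "Sup U \<in> U" using closed_contains_Sup[OF False] by simp
    have below: "y u < m" if u: "Sup U < u" "u < t" for u
    proof (rule ccontr)
      assume "\<not> y u < m"
      with u u0U have "u \<in> U" by (auto simp: U_def)
      then have "u \<le> Sup U" using bdd by (rule cSup_upper)
      with u show False by simp
    qed
    have "0 \<le> Sup U" using u0U s by (auto simp: U_def)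
    moreover have "Sup U < t" using u0U contra by (cases "Sup U = t") (auto simp: U_def)
    ultimately have "y (Sup U) < y t" using increasing_below_threshold[OF der pos] below by blast
    with contra u0U show False by (auto simp: U_def)
  qed
qed

lemma inner_nonneg_vec:
  fixes b x :: "real^'n"
  assumes "nonneg_vec b" "nonneg_vec x"
  shows "0 \<le> b \<bullet> x"
  using assms unfolding inner_vec_def nonneg_vec_def by (auto intro!: sum_nonneg)

lemma component_le_inner_nonneg_vec:
  fixes b x :: "real^'n"
  assumes "nonneg_vec b" "nonneg_vec x" "0 < b $ i"
  shows "x $ i \<le> (b \<bullet> x) / b $ i"
proof -
  have "b $ i * x $ i \<le> b \<bullet> x"
    unfolding inner_vec_def inner_real_def
    by (rule member_le_sum) (use assms in \<open>auto simp: nonneg_vec_def\<close>)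
  with assms(3) show ?thesis by (simp add: pos_le_divide_eq mult.commute)
qed

lemma supp_vec_pos:
  assumes "nonneg_vec b" "i \<in> supp_vec b"
  shows "0 < b $ i"
  using assms by (auto simp: supp_vec_def nonneg_vec_def order_le_neq_trans)

lemma moiety_combination_nonneg:
  assumes "moieties S Mo" "K \<subseteq> Mo" "\<And>m. m \<in> K \<Longrightarrow> 0 \<le> c m"
  shows "nonneg_vec (\<Sum>m\<in>K. c m *\<^sub>R m)"
  using assms unfolding moieties_def moiety_cone_def nonneg_vec_def sum_component
  by (auto intro!: sum_nonneg)

lemma moiety_combination_left_kernel:
  assumes "moieties S Mo" "K \<subseteq> Mo"
  shows "(\<Sum>m\<in>K. c m *\<^sub>R m) v* S = 0"
proof -
  have "(\<Sum>m\<in>K. c m *\<^sub>R m) \<in> span Mo"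
    using assms(2) by (intro span_sum span_scale span_base) auto
  with assms(1) show ?thesis by (simp add: moieties_def left_kernel_def)
qed

lemma inner_protocell_rhs:
  assumes "b v* S = 0"
  shows "b \<bullet> protocell_rhs S f fnu fme me Cme x
           = b \<bullet> fnu x - fme x * (b $ me + (b \<bullet> x) / Cme)"
proof -
  have "b \<bullet> (S *v f x) = 0" using assms by (simp add: dot_lmul_matrix[symmetric])
  then show ?thesis
    by (simp add: protocell_rhs_def inner_diff_right inner_add_right inner_axis algebra_simps)
qed

text \<open>For diffusive influx the scarcity threshold is half the outside concentration.\<close>

lemma nutrient_flux_pos_below:
  fixes fnu :: "real^'n::finite \<Rightarrow> real^'n"
  assumes "nutrient_flux Snu fnu"
  obtains a \<delta> :: "'n \<Rightarrow> real"
  where "\<And>i. i \<in> Snu \<Longrightarrow> 0 < a i \<and> 0 < \<delta> i"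
    and "\<And>x i. i \<in> Snu \<Longrightarrow> x $ i \<le> \<delta> i \<Longrightarrow> a i \<le> fnu x $ i"
proof -
  from assms consider (const) c where "\<forall>i\<in>Snu. 0 < c $ i" "\<forall>x. \<forall>i\<in>Snu. fnu x $ i = c $ i"
    | (diffusion) D Aout Ko where "\<forall>i\<in>Snu. 0 < D i \<and> 0 < Aout i \<and> 0 < Ko i"
        "\<forall>x. \<forall>i\<in>Snu. fnu x $ i = D i * (Aout i - x $ i) / (1 + Aout i / Ko i)"
    unfolding nutrient_flux_def by blast
  then show ?thesis
  proof cases
    case const
    then show ?thesis by (intro that[of "\<lambda>i. c $ i" "\<lambda>_. 1"]) auto
  next
    case diffusion
    show ?thesis
    proof (rule that[of "\<lambda>i. D i * (Aout i / 2) / (1 + Aout i / Ko i)" "\<lambda>i. Aout i / 2"])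
      fix i assume "i \<in> Snu"
      then show "0 < D i * (Aout i / 2) / (1 + Aout i / Ko i) \<and> 0 < Aout i / 2"
        using diffusion(1) by (auto intro!: divide_pos_pos add_pos_pos)
    next
      fix x :: "real^'n" and i assume i: "i \<in> Snu" and small: "x $ i \<le> Aout i / 2"
      have "0 < 1 + Aout i / Ko i" using diffusion(1) i by (auto intro!: add_pos_pos)
      moreover have "D i * (Aout i / 2) \<le> D i * (Aout i - x $ i)"
        using diffusion(1) i small by (intro mult_left_mono) auto
      ultimately have "D i * (Aout i / 2) / (1 + Aout i / Ko i)
          \<le> D i * (Aout i - x $ i) / (1 + Aout i / Ko i)"
        by (intro divide_right_mono) auto
      then show "D i * (Aout i / 2) / (1 + Aout i / Ko i) \<le> fnu x $ i"
        using diffusion(2) i by simp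
    qed
  qed
qed

lemma nutrient_flux_lower_bound:
  fixes b :: "real^'n::finite"
  assumes nut: "nutrient_flux Snu fnu" and b: "nonneg_vec b"
    and fed: "Snu \<inter> supp_vec b \<noteq> {}"
  obtains \<beta> \<epsilon> where "0 < \<beta>" "0 < \<epsilon>"
    "\<And>x. nonneg_vec x \<Longrightarrow> b \<bullet> x < \<epsilon> \<Longrightarrow> \<beta> \<le> b \<bullet> fnu x"
proof -
  obtain a \<delta> where a\<delta>: "\<And>i. i \<in> Snu \<Longrightarrow> 0 < a i \<and> 0 < \<delta> i"
    and influx: "\<And>x i. i \<in> Snu \<Longrightarrow> x $ i \<le> \<delta> i \<Longrightarrow> a i \<le> fnu x $ i"
    using nutrient_flux_pos_below[OF nut] by blast
  define T where "T = Snu \<inter> supp_vec b"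
  from fed obtain j where j: "j \<in> T" by (auto simp: T_def)
  have bT: "0 < b $ i" if "i \<in> T" for i
    using supp_vec_pos[OF b] that by (auto simp: T_def)
  define \<epsilon> where "\<epsilon> = Min ((\<lambda>i. b $ i * \<delta> i) ` T)"
  have "0 < b $ j * a j" using j bT a\<delta> by (auto simp: T_def)
  moreover have "0 < \<epsilon>" unfolding \<epsilon>_def
    by (subst Min_gr_iff) (use j bT a\<delta> in \<open>auto simp: T_def\<close>)
  moreover have "b $ j * a j \<le> b \<bullet> fnu x" if x: "nonneg_vec x" "b \<bullet> x < \<epsilon>" for x
  proof -
    have term_bound: "b $ i * a i \<le> b $ i * fnu x $ i" if i: "i \<in> T" for i
    proof -
      have "\<epsilon> \<le> b $ i * \<delta> i" unfolding \<epsilon>_def using i by (intro Min_le) auto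
      with x(2) have "(b \<bullet> x) / b $ i < \<delta> i"
        using bT[OF i] by (simp add: divide_less_eq mult.commute)
      then have "x $ i \<le> \<delta> i"
        using component_le_inner_nonneg_vec[OF b x(1) bT[OF i]] by simp
      then show ?thesis using influx bT[OF i] i by (simp add: T_def)
    qed
    have term_nonneg: "0 \<le> b $ i * fnu x $ i" for i
    proof (cases "i \<in> T")
      case True
      then have "0 < a i" using a\<delta> by (simp add: T_def)
      with term_bound[OF True] bT[OF True] show ?thesis
        by (meson less_imp_le mult_pos_pos order_trans)
    next
      case False
      then show ?thesis using nut by (auto simp: T_def supp_vec_def nutrient_flux_def)
    qed
    have "b $ j * a j \<le> b $ j * fnu x $ j" by (rule term_bound[OF j])
    also have "\<dots> \<le> (\<Sum>i\<in>UNIV. b $ i * fnu x $ i)"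
      by (rule member_le_sum) (use term_nonneg in auto)
    finally show ?thesis by (simp add: inner_vec_def)
  qed
  ultimately show ?thesis by (rule that)
qed

lemma membrane_flux_nonneg:
  assumes "membrane_flux Sme me fme" "nonneg_vec x"
  shows "0 \<le> fme x"
proof -
  have "nonneg_vec (0 :: real^'a)" by (simp add: nonneg_vec_def)
  with assms show ?thesis unfolding membrane_flux_def by (metis nonneg_vec_def zero_index)
qed

text \<open>Only the species of \<open>Sme\<close> matter to \<open>fme\<close>, and each of them is at most
\<open>b \<bullet> x / bmin\<close>, so continuity at \<open>0\<close> applies.\<close>

lemma membrane_flux_small:
  fixes b :: "real^'n::finite"
  assumes mem: "membrane_flux Sme me fme" and b: "nonneg_vec b"
    and supp: "Sme \<subseteq> supp_vec b" and "0 < e"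
  obtains \<epsilon> where "0 < \<epsilon>" "\<And>x. nonneg_vec x \<Longrightarrow> b \<bullet> x < \<epsilon> \<Longrightarrow> fme x < e"
proof -
  have me: "me \<in> Sme" and local: "\<And>x y. (\<forall>i\<in>Sme. x $ i = y $ i) \<Longrightarrow> fme x = fme y"
    and cont: "continuous_on {x. nonneg_vec x} fme" and zero: "fme 0 = 0"
    using mem unfolding membrane_flux_def by blast+
  have "nonneg_vec (0 :: real^'n)" by (simp add: nonneg_vec_def)
  with cont \<open>0 < e\<close> obtain d where "0 < d"
    and d: "\<And>x. nonneg_vec x \<Longrightarrow> dist x 0 < d \<Longrightarrow> dist (fme x) (fme 0) < e"
    unfolding continuous_on_iff by (metis mem_Collect_eq)
  define bmin where "bmin = Min ((\<lambda>i. b $ i) ` Sme)"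
  have bSme: "0 < b $ i" if "i \<in> Sme" for i using supp_vec_pos[OF b] supp that by auto
  have "0 < bmin" unfolding bmin_def
    by (subst Min_gr_iff) (use me bSme in auto)
  have bmin_le: "bmin \<le> b $ i" if "i \<in> Sme" for i unfolding bmin_def using that by (intro Min_le) auto
  define \<epsilon> where "\<epsilon> = d * bmin / real CARD('n)"
  have "0 < \<epsilon>" unfolding \<epsilon>_def using \<open>0 < d\<close> \<open>0 < bmin\<close> by simp
  moreover have "fme x < e" if x: "nonneg_vec x" "b \<bullet> x < \<epsilon>" for x
  proof -
    define v :: "real^'n" where "v = (\<chi> i. if i \<in> Sme then x $ i else 0)"
    have v_comp: "\<bar>v $ i\<bar> \<le> (b \<bullet> x) / bmin" for i
    proof (cases "i \<in> Sme")
      case True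
      have "x $ i \<le> (b \<bullet> x) / b $ i"
        by (rule component_le_inner_nonneg_vec[OF b x(1) bSme[OF True]])
      also have "\<dots> \<le> (b \<bullet> x) / bmin"
        using bmin_le[OF True] \<open>0 < bmin\<close> inner_nonneg_vec[OF b x(1)]
        by (intro divide_left_mono) auto
      finally show ?thesis using True x(1) by (simp add: v_def nonneg_vec_def)
    next
      case False
      then show ?thesis using inner_nonneg_vec[OF b x(1)] \<open>0 < bmin\<close> by (simp add: v_def)
    qed
    have "norm v \<le> (\<Sum>i\<in>UNIV. \<bar>v $ i\<bar>)" by (rule norm_le_l1_cart)
    also have "\<dots> \<le> real CARD('n) * (b \<bullet> x) / bmin" using sum_mono[OF v_comp] by simp
    also have "\<dots> < d"
      using x(2) \<open>0 < bmin\<close> unfolding \<epsilon>_def by (simp add: field_simps)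
    finally have "dist (fme v) (fme 0) < e"
      using d x(1) by (simp add: v_def nonneg_vec_def)
    moreover have "fme x = fme v" by (rule local) (simp add: v_def)
    ultimately show ?thesis using zero by simp
  qed
  ultimately show ?thesis by (rule that)
qed

lemma inner_protocell_rhs_pos_near_zero:
  fixes b :: "real^'n::finite"
  assumes ker: "b v* S = 0" and b: "nonneg_vec b"
    and mem: "membrane_flux Sme me fme" and Cme: "0 < Cme" and nut: "nutrient_flux Snu fnu"
    and me_supp: "Sme \<subseteq> supp_vec b" and nu_supp: "Snu \<inter> supp_vec b \<noteq> {}"
  obtains \<epsilon> where "0 < \<epsilon>"
    "\<And>x. nonneg_vec x \<Longrightarrow> b \<bullet> x < \<epsilon> \<Longrightarrow> 0 < b \<bullet> protocell_rhs S f fnu fme me Cme x"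
proof -
  obtain \<beta> \<epsilon>\<^sub>1 where "0 < \<beta>" "0 < \<epsilon>\<^sub>1"
    and influx: "\<And>x. nonneg_vec x \<Longrightarrow> b \<bullet> x < \<epsilon>\<^sub>1 \<Longrightarrow> \<beta> \<le> b \<bullet> fnu x"
    using nutrient_flux_lower_bound[OF nut b nu_supp] by blast
  define B where "B = b $ me + 1 / Cme"
  have "0 < B" unfolding B_def using b Cme by (simp add: nonneg_vec_def add_nonneg_pos)
  then obtain \<epsilon>\<^sub>2 where "0 < \<epsilon>\<^sub>2"
    and outflux: "\<And>x. nonneg_vec x \<Longrightarrow> b \<bullet> x < \<epsilon>\<^sub>2 \<Longrightarrow> fme x < \<beta> / (2 * B)"
    using membrane_flux_small[OF mem b me_supp, of "\<beta> / (2 * B)"] \<open>0 < \<beta>\<close> by auto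
  define \<epsilon> where "\<epsilon> = min \<epsilon>\<^sub>1 (min 1 \<epsilon>\<^sub>2)"
  have "0 < \<epsilon>" unfolding \<epsilon>_def using \<open>0 < \<epsilon>\<^sub>1\<close> \<open>0 < \<epsilon>\<^sub>2\<close> by simp
  moreover have "0 < b \<bullet> protocell_rhs S f fnu fme me Cme x"
    if x: "nonneg_vec x" "b \<bullet> x < \<epsilon>" for x
  proof -
    have "0 \<le> b $ me + (b \<bullet> x) / Cme"
      using b inner_nonneg_vec[OF b x(1)] Cme by (simp add: nonneg_vec_def)
    moreover have "b $ me + (b \<bullet> x) / Cme \<le> B"
      using x(2) Cme unfolding B_def \<epsilon>_def by (simp add: divide_right_mono)
    ultimately have "fme x * (b $ me + (b \<bullet> x) / Cme) \<le> \<beta> / (2 * B) * B"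
      using membrane_flux_nonneg[OF mem x(1)] outflux[OF x(1)] x(2)
      unfolding \<epsilon>_def by (intro mult_mono) auto
    also have "\<dots> = \<beta> / 2" using \<open>0 < B\<close> by simp
    finally show ?thesis
      using influx[OF x(1)] x(2) \<open>0 < \<beta>\<close> inner_protocell_rhs[OF ker, of f fnu fme me Cme x]
      unfolding \<epsilon>_def by linarith
  qed
  ultimately show ?thesis by (rule that)
qed

lemma has_real_derivative_inner_left:
  assumes "(A has_vector_derivative v) F"
  shows "((\<lambda>t. b \<bullet> A t) has_real_derivative b \<bullet> v) F"
  using has_derivative_inner_right[OF assms[unfolded has_vector_derivative_def], of b]
  by (simp add: has_field_derivative_def mult_commute_abs)

theorem mainTheorem5:
  fixes S :: "real^'r::finite^'n::finite"
    and f :: "real^'n \<Rightarrow> real^'r"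
    and fnu :: "real^'n \<Rightarrow> real^'n"
    and fme :: "real^'n \<Rightarrow> real"
    and me :: 'n and Sme Snu :: "'n set" and Cme :: real
    and A :: "real \<Rightarrow> real^'n"
    and Mo :: "(real^'n) set" and K :: "(real^'n) set" and c :: "real^'n \<Rightarrow> real"
    and b :: "real^'n"
  assumes cons: "conservative S"
    and p_pos: "dim (left_kernel S) \<ge> 1"
    and rates: "\<And>x. nonneg_vec x \<Longrightarrow> (\<forall>r. 0 \<le> f x $ r)"
    and mem: "membrane_flux Sme me fme"
    and Cme: "Cme > 0"
    and nut: "nutrient_flux Snu fnu"
    and traj_nonneg: "\<And>t. t \<ge> 0 \<Longrightarrow> nonneg_vec (A t)"
    and traj_ode: "\<And>t. t \<ge> 0 \<Longrightarrow>
        (A has_vector_derivative protocell_rhs S f fnu fme me Cme (A t)) (at t within {0..})"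
    and moi: "moieties S Mo"
    and K: "K \<subseteq> Mo" "K \<noteq> {}" "\<And>m. m \<in> K \<Longrightarrow> c m > 0"
    and b_def: "b = (\<Sum>m\<in>K. c m *\<^sub>R m)"
    and me_supp: "Sme \<subseteq> supp_vec b"
    and nu_supp: "Snu \<inter> supp_vec b \<noteq> {}"
  shows "(b \<bullet> A 0 > 0 \<longrightarrow> (\<exists>c0>0. \<forall>t\<ge>0. b \<bullet> A t \<ge> c0)) \<and>
         (b \<bullet> A 0 = 0 \<longrightarrow> (\<forall>t1>0. \<exists>c0>0. \<forall>t\<ge>t1. b \<bullet> A t \<ge> c0))"
proof -
  have b: "nonneg_vec b"
    unfolding b_def by (rule moiety_combination_nonneg[OF moi K(1)]) (simp add: K(3) less_imp_le)
  have ker: "b v* S = 0"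
    unfolding b_def by (rule moiety_combination_left_kernel[OF moi K(1)])
  obtain \<epsilon> where "0 < \<epsilon>"
    and growth: "\<And>x. nonneg_vec x \<Longrightarrow> b \<bullet> x < \<epsilon> \<Longrightarrow> 0 < b \<bullet> protocell_rhs S f fnu fme me Cme x"
    using inner_protocell_rhs_pos_near_zero[OF ker b mem Cme nut me_supp nu_supp] by blast
  define y where "y t = b \<bullet> A t" for t
  have der: "(y has_real_derivative b \<bullet> protocell_rhs S f fnu fme me Cme (A t)) (at t within {0..})"
    if "0 \<le> t" for t
    unfolding y_def by (rule has_real_derivative_inner_left[OF traj_ode[OF that]])
  have barrier: "\<epsilon> \<le> y t \<or> y s < y t" if "0 \<le> s" "s < t" for s t
    by (rule threshold_or_increase[OF der _ that]) (use growth traj_nonneg in \<open>auto simp: y_def\<close>)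
  have lower: "min \<epsilon> (y s) \<le> y t" if "0 \<le> s" "s \<le> t" for s t
    using barrier[of s t] that by (cases "s = t") auto
  show ?thesis
  proof (intro conjI impI allI)
    assume "0 < b \<bullet> A 0"
    then show "\<exists>c0>0. \<forall>t\<ge>0. c0 \<le> b \<bullet> A t"
      using lower[of 0] \<open>0 < \<epsilon>\<close> by (intro exI[of _ "min \<epsilon> (y 0)"]) (auto simp: y_def)
  next
    fix t1 :: real assume "b \<bullet> A 0 = 0" "0 < t1"
    then have "0 < y t1" using barrier[of 0 t1] \<open>0 < \<epsilon>\<close> by (auto simp: y_def)
    then show "\<exists>c0>0. \<forall>t\<ge>t1. c0 \<le> b \<bullet> A t"
      using lower[of t1] \<open>0 < \<epsilon>\<close> \<open>0 < t1\<close> by (intro exI[of _ "min \<epsilon> (y t1)"]) (auto simp: y_def)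
  qed
qed

end
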